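(* Let $b\in\mathbb{Z}^{V_+}_{\ge0}$ and $\bar x\in\mathcal{X}\cap\mathbb{Z}^E$. Then $$\operatorname{conv}\big(\Pi(\bar x)\cap[\mathbf 0,b]^N\big)=\bigcap_{R\in\mathcal{R}(\bar x)}\operatorname{conv}\big(\Pi(R)\cap[\mathbf 0,b]^N\big).$$
   Context: $G=(V,E)$ complete undirected graph with $V=\{0\}\cup V_+$ ($0$ depot, $V_+$ customers); $D=(V,A)$ replaces each edge by two opposite arcs. Capacity $C>0$; scenarios $\xi\in[N]$ with demands $d^\xi\in\mathbb{Q}^{V_+}_{\ge0}$, $d^\xi(v)\le C$, and probabilities $p_\xi\ge0$ summing to $1$; $\bar d=\sum_\xi p_\xi d^\xi$. $f(S)=\sum_{i\in S}f(i)$; $\delta(S)$: edges with exactly one end in $S$; $E(S)$: edges with both ends in $S$. $\mathcal{X}$ is one of $\mathcal{X}_{\mathrm{sub}}=\{x\in[0,2]^E: x(\delta(v))=2\ \forall v\in V_+,\ x(E(S))\le|S|-1\ \forall\emptyset\ne S\subseteq V_+\}$ or $\mathcal{X}_{\mathrm{cvrp}}=\mathcal{X}_{\mathrm{sub}}\cap\{x:x(\delta(0))=2k,\ x(E(S))\le|S|-\lceil\bar d(S)/C\rceil\}$. A route $R=(v_1,\dots,v_\ell)$ is the cycle $0,v_1,\dots,v_\ell,0$ through distinct customers, $v_0=v_{\ell+1}=0$. Each $x\in\mathcal{X}\cap\mathbb{Z}^E$ encodes a collection of routes $\mathcal{R}(x)$ whose customer sets partition $V_+$. For a route $R$ and $\xi$,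 $\mathcal{Y}^\xi(R)$ is the set of $y^\xi\in\mathbb{Z}^{V_+}_{\ge0}$ for which there exist $f\in\mathbb{R}^A_{\ge0}$, $g\in\mathbb{R}^{V_+}_{\ge0}$ with $f_{(v_{i-1},v_i)}+d^\xi(v_i)=f_{(v_i,v_{i+1})}+g_{v_i}$ ($i\in[\ell]$), $f_{(v_{i-1},v_i)}\le C$ ($i\in[\ell+1]$), $g_{v_i}\le Cy^\xi_{v_i}$ ($i\in[\ell]$). $\Pi(R)=\mathcal{Y}^1(R)\times\cdots\times\mathcal{Y}^N(R)\subseteq\mathbb{Z}^{[N]\times V_+}$, $\Pi(x)=\bigcap_{R\in\mathcal{R}(x)}\Pi(R)$. $[\mathbf 0,b]^N=\{y:0\le y^\xi_v\le b_v\}$. *)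

theory Defs
  imports "HOL-Analysis.Analysis"
begin

text \<open>Vertices are 0..n, 0 is the depot, customers are V_+ = {1..n}.
  Undirected edges are two-element sets of vertices. Scenarios are [N] = {1..N}.\<close>

definition Vplus :: "nat \<Rightarrow> nat set" where
  "Vplus n = {1..n}"

definition Edges :: "nat \<Rightarrow> nat set set" where
  "Edges n = {e. \<exists>u v. e = {u, v} \<and> u \<noteq> v \<and> u \<le> n \<and> v \<le> n}"

definition delta :: "nat \<Rightarrow> nat set \<Rightarrow> nat set set" where
  "delta n S = {e \<in> Edges n. card (e \<inter> S) = 1}"

definition Ein :: "nat \<Rightarrow> nat set \<Rightarrow> nat set set" where
  "Ein n S = {e \<in> Edges n. e \<subseteq> S}"

definition Xsub :: "nat \<Rightarrow> (nat set \<Rightarrow> real) set" where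
  "Xsub n = {x. (\<forall>e. e \<notin> Edges n \<longrightarrow> x e = 0)
      \<and> (\<forall>e \<in> Edges n. 0 \<le> x e \<and> x e \<le> 2)
      \<and> (\<forall>v \<in> Vplus n. sum x (delta n {v}) = 2)
      \<and> (\<forall>S. S \<noteq> {} \<and> S \<subseteq> Vplus n \<longrightarrow> sum x (Ein n S) \<le> real (card S) - 1)}"

definition Xcvrp :: "nat \<Rightarrow> nat \<Rightarrow> real \<Rightarrow> (nat \<Rightarrow> real) \<Rightarrow> (nat set \<Rightarrow> real) set" where
  "Xcvrp n k C dbar = Xsub n \<inter> {x. sum x (delta n {0}) = 2 * real k
      \<and> (\<forall>S. S \<noteq> {} \<and> S \<subseteq> Vplus n \<longrightarrow>
            sum x (Ein n S) \<le> real (card S) - of_int \<lceil>sum dbar S / C\<rceil>)}"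

text \<open>Vertex at position i of the cycle 0, v_1, ..., v_l, 0 (positions 0 and l+1 are the depot).\<close>
definition rvert :: "nat list \<Rightarrow> nat \<Rightarrow> nat" where
  "rvert R i = (if 1 \<le> i \<and> i \<le> length R then R ! (i - 1) else 0)"

text \<open>R is one of the routes encoded by the integral x (either orientation of the cycle).\<close>
definition route_of :: "nat \<Rightarrow> (nat set \<Rightarrow> real) \<Rightarrow> nat list \<Rightarrow> bool" where
  "route_of n x R \<longleftrightarrow> R \<noteq> [] \<and> distinct R \<and> set R \<subseteq> Vplus n
     \<and> (length R = 1 \<longrightarrow> x {0, hd R} = 2)
     \<and> (length R \<ge> 2 \<longrightarrow> (\<forall>i \<in> {1..length R + 1}. x {rvert R (i - 1), rvert R i} = 1))"

definition Routes :: "nat \<Rightarrow> (nat set \<Rightarrow> real) \<Rightarrow> nat list set" where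
  "Routes n x = {R. route_of n x R}"

text \<open>Ambient lattice points Z_{>=0}^{[N] x V_+}, as functions vanishing outside [N] x V_+.\<close>
definition Amb :: "nat \<Rightarrow> nat \<Rightarrow> (nat \<times> nat \<Rightarrow> int) set" where
  "Amb n N = {y. (\<forall>\<xi> v. (\<xi>, v) \<notin> {1..N} \<times> Vplus n \<longrightarrow> y (\<xi>, v) = 0)
                 \<and> (\<forall>\<xi> \<in> {1..N}. \<forall>v \<in> Vplus n. 0 \<le> y (\<xi>, v))}"

text \<open>Y^xi(R): flows f indexed by the arc positions 1..l+1 (arc (v_{i-1},v_i)),
  g indexed by customer positions 1..l.\<close>
definition Yset :: "real \<Rightarrow> (nat \<Rightarrow> real) \<Rightarrow> nat list \<Rightarrow> (nat \<Rightarrow> int) set" where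
  "Yset C dxi R = {y. \<exists>f g :: nat \<Rightarrow> real.
      (\<forall>i \<in> {1..length R + 1}. 0 \<le> f i \<and> f i \<le> C)
    \<and> (\<forall>i \<in> {1..length R}. 0 \<le> g i \<and> g i \<le> C * of_int (y (R ! (i - 1))))
    \<and> (\<forall>i \<in> {1..length R}. f i + dxi (R ! (i - 1)) = f (i + 1) + g i)}"

definition PiR :: "nat \<Rightarrow> nat \<Rightarrow> real \<Rightarrow> (nat \<Rightarrow> nat \<Rightarrow> real) \<Rightarrow> nat list \<Rightarrow> (nat \<times> nat \<Rightarrow> int) set" where
  "PiR n N C d R = {y \<in> Amb n N. \<forall>\<xi> \<in> {1..N}. (\<lambda>v. y (\<xi>, v)) \<in> Yset C (d \<xi>) R}"

definition PiX :: "nat \<Rightarrow> nat \<Rightarrow> real \<Rightarrow> (nat \<Rightarrow> nat \<Rightarrow> real) \<Rightarrow> (nat set \<Rightarrow> real) \<Rightarrow> (nat \<times> nat \<Rightarrow> int) set" where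
  "PiX n N C d x = Amb n N \<inter> (\<Inter>R \<in> Routes n x. PiR n N C d R)"

definition Box :: "nat \<Rightarrow> nat \<Rightarrow> (nat \<Rightarrow> int) \<Rightarrow> (nat \<times> nat \<Rightarrow> int) set" where
  "Box n N b = {y. \<forall>\<xi> \<in> {1..N}. \<forall>v \<in> Vplus n. 0 \<le> y (\<xi>, v) \<and> y (\<xi>, v) \<le> b v}"

text \<open>Convex hull in R^{[N] x V_+}, written out as the set of finite convex combinations
  (function spaces are not a real_vector instance in the library).\<close>
definition conv :: "(nat \<times> nat \<Rightarrow> real) set \<Rightarrow> (nat \<times> nat \<Rightarrow> real) set" where
  "conv S = {z. \<exists>F u. finite F \<and> F \<subseteq> S \<and> (\<forall>w \<in> F. 0 \<le> u w) \<and> sum u F = 1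
                    \<and> z = (\<lambda>i. \<Sum>w \<in> F. u w * w i)}"

definition realpts :: "(nat \<times> nat \<Rightarrow> int) set \<Rightarrow> (nat \<times> nat \<Rightarrow> real) set" where
  "realpts Y = (\<lambda>y. \<lambda>i. real_of_int (y i)) ` Y"

definition RAmb :: "nat \<Rightarrow> nat \<Rightarrow> (nat \<times> nat \<Rightarrow> real) set" where
  "RAmb n N = {z. \<forall>\<xi> v. (\<xi>, v) \<notin> {1..N} \<times> Vplus n \<longrightarrow> z (\<xi>, v) = 0}"

end

theory Submission
  imports Defs
begin

text \<open>Each set \<Pi>(R) constrains only the coordinates [N] \<times> R of the customers on R, and
  \<Pi>(rev R) = \<Pi>(R). For an integral x \<in> X_sub every customer has exactly two neighbours in
  the support of x, so routes of x sharing a customer coincide up to orientation; hence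
  \<Pi>(x) \<inter> [0,b]^N is a product of the sets \<Pi>(R) \<inter> [0,b]^N over disjoint coordinate blocks.
  The convex hull of such a product is the intersection of the convex hulls of the factors:
  multiplying the weights of convex combinations representing z in two factors yields a
  convex combination of merged points representing z. When there are no routes, a maximal
  path of unit edges shows that there are no customers either.\<close>

section \<open>Convex hulls of products\<close>

definition merge_on :: "'i set \<Rightarrow> ('i \<Rightarrow> 'a) \<Rightarrow> ('i \<Rightarrow> 'a) \<Rightarrow> 'i \<Rightarrow> 'a" where
  "merge_on P a c = (\<lambda>i. if i \<in> P then a i else c i)"

definition determined_on :: "'i set \<Rightarrow> ('i \<Rightarrow> 'a) set \<Rightarrow> ('i \<Rightarrow> 'a) set \<Rightarrow> bool" where
  "determined_on P Base A \<longleftrightarrow> (\<forall>a \<in> A. \<forall>m \<in> Base. (\<forall>i \<in> P. m i = a i) \<longrightarrow> m \<in> A)"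

lemma conv_mono: "A \<subseteq> B \<Longrightarrow> conv A \<subseteq> conv B"
  unfolding conv_def by blast

lemma subset_conv: "S \<subseteq> conv S"
proof
  fix w assume "w \<in> S"
  then show "w \<in> conv S"
    unfolding conv_def by (intro CollectI exI[of _ "{w}"] exI[of _ "\<lambda>_. 1"]) simp
qed

lemma conv_subset_RAmb: "S \<subseteq> RAmb n N \<Longrightarrow> conv S \<subseteq> RAmb n N"
  unfolding conv_def RAmb_def by (auto intro!: sum.neutral)

lemma convex_comb_in_conv:
  assumes "finite K" "\<forall>k \<in> K. q k \<in> S" "\<forall>k \<in> K. 0 \<le> w k" "sum w K = 1"
  shows "(\<lambda>i. \<Sum>k \<in> K. w k * q k i) \<in> conv S"
proof -
  define u where "u y = (\<Sum>k \<in> {k \<in> K. q k = y}. w k)" for y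
  have "(\<Sum>k \<in> K. w k * q k i) = (\<Sum>y \<in> q ` K. u y * y i)" for i
    using sum.image_gen[OF \<open>finite K\<close>, of "\<lambda>k. w k * q k i" q]
    unfolding u_def sum_distrib_right by (auto intro!: sum.cong)
  moreover have "sum u (q ` K) = 1"
    using assms(4) sum.image_gen[OF \<open>finite K\<close>, of w q] by (simp add: u_def)
  moreover have "\<forall>y \<in> q ` K. 0 \<le> u y"
    using assms(3) unfolding u_def by (auto intro: sum_nonneg)
  ultimately show ?thesis
    using assms(1,2) unfolding conv_def by (intro CollectI exI[of _ "q ` K"] exI[of _ u]) auto
qed

lemma conv_merge:
  assumes merge: "\<forall>a \<in> A. \<forall>c \<in> B. merge_on P a c \<in> S"
    and "z \<in> conv A" and "z \<in> conv B"
  shows "z \<in> conv S"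
proof -
  obtain F u where F: "finite F" "F \<subseteq> A" "\<forall>a \<in> F. 0 \<le> u a" "sum u F = 1"
    and zF: "z = (\<lambda>i. \<Sum>a \<in> F. u a * a i)"
    using \<open>z \<in> conv A\<close> unfolding conv_def by blast
  obtain G v where G: "finite G" "G \<subseteq> B" "\<forall>c \<in> G. 0 \<le> v c" "sum v G = 1"
    and zG: "z = (\<lambda>i. \<Sum>c \<in> G. v c * c i)"
    using \<open>z \<in> conv B\<close> unfolding conv_def by blast
  define w where "w ac = u (fst ac) * v (snd ac)" for ac
  define q where "q ac = (merge_on P (fst ac) (snd ac) :: nat \<times> nat \<Rightarrow> real)" for ac
  have sum_w: "(\<Sum>ac \<in> F \<times> G. w ac * h ac) = (\<Sum>a \<in> F. \<Sum>c \<in> G. u a * v c * h (a, c))" for h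
    unfolding w_def by (simp add: sum.cartesian_product split_beta)
  have "z = (\<lambda>i. \<Sum>ac \<in> F \<times> G. w ac * q ac i)"
  proof
    fix i
    show "z i = (\<Sum>ac \<in> F \<times> G. w ac * q ac i)"
    proof (cases "i \<in> P")
      case True
      have "(\<Sum>ac \<in> F \<times> G. w ac * q ac i) = (\<Sum>a \<in> F. u a * a i * (\<Sum>c \<in> G. v c))"
        using True by (simp add: sum_w q_def merge_on_def sum_distrib_left mult_ac)
      then show ?thesis using G(4) zF by simp
    next
      case False
      have "(\<Sum>ac \<in> F \<times> G. w ac * q ac i) = (\<Sum>a \<in> F. u a * (\<Sum>c \<in> G. v c * c i))"
        using False by (simp add: sum_w q_def merge_on_def sum_distrib_left mult_ac)
      then show ?thesis using F(4) zG by (simp add: sum_distrib_right[symmetric])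
    qed
  qed
  moreover have "sum w (F \<times> G) = 1"
    using sum_w[of "\<lambda>_. 1"] F(4) G(4) by (simp add: sum_product[symmetric])
  moreover have "\<forall>ac \<in> F \<times> G. q ac \<in> S"
    using merge F(2) G(2) unfolding q_def by auto
  moreover have "\<forall>ac \<in> F \<times> G. 0 \<le> w ac"
    using F(3) G(3) unfolding w_def by auto
  ultimately show ?thesis
    using convex_comb_in_conv[of "F \<times> G" q S w] F(1) G(1) by simp
qed

lemma conv_realpts_merge:
  assumes "\<forall>a \<in> A. \<forall>c \<in> B. merge_on P a c \<in> S"
    and "z \<in> conv (realpts A)" and "z \<in> conv (realpts B)"
  shows "z \<in> conv (realpts S)"
proof (rule conv_merge[OF _ assms(2,3)])
  have "merge_on P (\<lambda>i. real_of_int (a i)) (\<lambda>i. real_of_int (c i))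
      = (\<lambda>i. real_of_int (merge_on P a c i))" for a c
    by (simp add: merge_on_def fun_eq_iff)
  then show "\<forall>a \<in> realpts A. \<forall>c \<in> realpts B. merge_on P a c \<in> realpts S"
    using assms(1) unfolding realpts_def by auto
qed

lemma merge_on_in_Inter_determined:
  assumes merge_Base: "\<forall>P. \<forall>a \<in> Base. \<forall>c \<in> Base. merge_on P a c \<in> Base"
    and determined: "\<forall>R' \<in> insert R F. A R' \<subseteq> Base \<and> determined_on (blk R') Base (A R')"
    and disjoint_or_eq: "\<forall>R' \<in> F. blk R \<inter> blk R' = {} \<or> A R' = A R"
    and a: "a \<in> A R" and c: "c \<in> Base \<inter> \<Inter>(A ` F)"
  shows "merge_on (blk R) a c \<in> Base \<inter> \<Inter>(A ` insert R F)"
proof -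
  let ?m = "merge_on (blk R) a c"
  have m_Base: "?m \<in> Base"
    using determined a c by (intro merge_Base[rule_format]) auto
  have "\<forall>i \<in> blk R. ?m i = a i"
    unfolding merge_on_def by simp
  then have "?m \<in> A R"
    using determined a m_Base unfolding determined_on_def by blast
  moreover have "?m \<in> A R'" if R': "R' \<in> F" for R'
  proof (cases "A R' = A R")
    case False
    then have "\<forall>i \<in> blk R'. ?m i = c i"
      using disjoint_or_eq R' unfolding merge_on_def by auto
    moreover have "determined_on (blk R') Base (A R')" "c \<in> A R'"
      using determined c R' by auto
    ultimately show ?thesis
      using m_Base unfolding determined_on_def by blast
  qed (use \<open>?m \<in> A R\<close> in simp)
  ultimately show ?thesis
    using m_Base by blast
qed

lemma conv_realpts_Inter_determined:
  fixes A :: "'r \<Rightarrow> (nat \<times> nat \<Rightarrow> int) set" and blk :: "'r \<Rightarrow> (nat \<times> nat) set"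
  assumes "finite F"
    and merge_Base: "\<forall>P. \<forall>a \<in> Base. \<forall>c \<in> Base. merge_on P a c \<in> Base"
    and "\<forall>R \<in> F. A R \<subseteq> Base \<and> determined_on (blk R) Base (A R)"
    and "\<forall>R \<in> F. \<forall>R' \<in> F. blk R \<inter> blk R' = {} \<or> A R' = A R"
    and "z \<in> conv (realpts Base)" and "\<forall>R \<in> F. z \<in> conv (realpts (A R))"
  shows "z \<in> conv (realpts (Base \<inter> \<Inter>(A ` F)))"
  using assms(1,3-)
proof (induction F rule: finite_induct)
  case empty
  then show ?case by simp
next
  case (insert R F)
  have "\<forall>a \<in> A R. \<forall>c \<in> Base \<inter> \<Inter>(A ` F). merge_on (blk R) a c \<in> Base \<inter> \<Inter>(A ` insert R F)"
    using insert.prems(1,2) by (intro ballI merge_on_in_Inter_determined[OF merge_Base]) auto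
  moreover have "z \<in> conv (realpts (A R))"
    using insert.prems(4) by simp
  moreover have "z \<in> conv (realpts (Base \<inter> \<Inter>(A ` F)))"
    using insert.prems by (intro insert.IH) auto
  ultimately show ?case
    by (rule conv_realpts_merge)
qed

section \<open>The sets \<Pi>(R)\<close>

lemma Yset_cong:
  assumes "y \<in> Yset C dxi R" and "\<forall>v \<in> set R. y' v = y v"
  shows "y' \<in> Yset C dxi R"
proof -
  have "\<forall>i \<in> {1..length R}. y' (R ! (i - 1)) = y (R ! (i - 1))"
    using assms(2) by auto
  then show ?thesis
    using assms(1) unfolding Yset_def by fastforce
qed

text \<open>Traversing the route backwards, the load f on each arc becomes the free capacity C - f.\<close>

lemma Yset_rev:
  assumes "y \<in> Yset C dxi R"
  shows "y \<in> Yset C dxi (rev R)"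
proof -
  obtain f g :: "nat \<Rightarrow> real" where
    f: "\<forall>i \<in> {1..length R + 1}. 0 \<le> f i \<and> f i \<le> C"
    and g: "\<forall>i \<in> {1..length R}. 0 \<le> g i \<and> g i \<le> C * of_int (y (R ! (i - 1)))"
    and balance: "\<forall>i \<in> {1..length R}. f i + dxi (R ! (i - 1)) = f (i + 1) + g i"
    using assms unfolding Yset_def by blast
  define l where "l = length R"
  define f' where "f' i = C - f (l + 2 - i)" for i
  define g' where "g' i = g (l + 1 - i)" for i
  have rev_nth': "rev R ! (i - 1) = R ! (l + 1 - i - 1)" if "i \<in> {1..l}" for i
    using that by (auto simp: rev_nth l_def Suc_diff_Suc)
  have "\<forall>i \<in> {1..l + 1}. 0 \<le> f' i \<and> f' i \<le> C"
  proof
    fix i assume "i \<in> {1..l + 1}"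
    then have "l + 2 - i \<in> {1..length R + 1}" by (auto simp: l_def)
    then show "0 \<le> f' i \<and> f' i \<le> C" using f unfolding f'_def by auto
  qed
  moreover have "\<forall>i \<in> {1..l}. 0 \<le> g' i \<and> g' i \<le> C * of_int (y (rev R ! (i - 1)))"
  proof
    fix i assume i: "i \<in> {1..l}"
    then have "l + 1 - i \<in> {1..length R}" by (auto simp: l_def)
    then have "0 \<le> g (l + 1 - i) \<and> g (l + 1 - i) \<le> C * of_int (y (R ! (l + 1 - i - 1)))"
      using g by blast
    then show "0 \<le> g' i \<and> g' i \<le> C * of_int (y (rev R ! (i - 1)))"
      using rev_nth'[OF i] unfolding g'_def by simp
  qed
  moreover have "\<forall>i \<in> {1..l}. f' i + dxi (rev R ! (i - 1)) = f' (i + 1) + g' i"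
  proof
    fix i assume i: "i \<in> {1..l}"
    define j where "j = l + 1 - i"
    have "j \<in> {1..length R}" "l + 2 - i = j + 1" "l + 2 - (i + 1) = j"
      using i by (auto simp: j_def l_def)
    then show "f' i + dxi (rev R ! (i - 1)) = f' (i + 1) + g' i"
      using balance rev_nth'[OF i] unfolding f'_def g'_def j_def[symmetric] by force
  qed
  ultimately show ?thesis
    unfolding Yset_def l_def by auto
qed

lemma Yset_rev_eq [simp]: "Yset C dxi (rev R) = Yset C dxi R"
  using Yset_rev[of _ C dxi R] Yset_rev[of _ C dxi "rev R"] by auto

lemma PiR_rev_eq [simp]: "PiR n N C d (rev R) = PiR n N C d R"
  unfolding PiR_def by simp

lemma merge_on_Amb_Box:
  assumes "a \<in> Amb n N \<inter> Box n N b" "c \<in> Amb n N \<inter> Box n N b"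
  shows "merge_on P a c \<in> Amb n N \<inter> Box n N b"
  using assms unfolding Amb_def Box_def merge_on_def by auto

lemma determined_on_PiR_Box:
  "determined_on ({1..N} \<times> set R) (Amb n N \<inter> Box n N b) (PiR n N C d R \<inter> Box n N b)"
  unfolding determined_on_def PiR_def by (auto intro: Yset_cong)

section \<open>Routes of an integral point of the subtour polytope\<close>

lemma doubleton_in_Edges: "u \<le> n \<Longrightarrow> v \<le> n \<Longrightarrow> u \<noteq> v \<Longrightarrow> {u, v} \<in> Edges n"
  unfolding Edges_def by blast

lemma finite_Edges: "finite (Edges n)"
  by (rule finite_subset[of _ "Pow {0..n}"]) (auto simp: Edges_def)

lemma Xsub_edge_nonneg: "x \<in> Xsub n \<Longrightarrow> u \<le> n \<Longrightarrow> v \<le> n \<Longrightarrow> u \<noteq> v \<Longrightarrow> 0 \<le> x {u, v}"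
  unfolding Xsub_def using doubleton_in_Edges by blast

lemma Xsub_subtour:
  "x \<in> Xsub n \<Longrightarrow> S \<noteq> {} \<Longrightarrow> S \<subseteq> Vplus n \<Longrightarrow> sum x (Ein n S) \<le> real (card S) - 1"
  unfolding Xsub_def by blast

lemma Xsub_edge_le_1:
  assumes "x \<in> Xsub n" "u \<in> Vplus n" "v \<in> Vplus n" "u \<noteq> v"
  shows "x {u, v} \<le> 1"
proof -
  have "Ein n {u, v} = {{u, v}}"
    using assms(2-4) unfolding Ein_def Edges_def Vplus_def by (auto simp: doubleton_eq_iff)
  then show ?thesis
    using Xsub_subtour[OF assms(1), of "{u, v}"] assms(2-4) by simp
qed

lemma delta_singleton: "delta n {v} = {e \<in> Edges n. v \<in> e}"
proof -
  have "card (e \<inter> {v}) = 1 \<longleftrightarrow> v \<in> e" for e :: "nat set"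
    by (cases "v \<in> e") auto
  then show ?thesis
    unfolding delta_def by simp
qed

lemma incident_Edges_eq: "v \<le> n \<Longrightarrow> {e \<in> Edges n. v \<in> e} = (\<lambda>u. {v, u}) ` ({0..n} - {v})"
  unfolding Edges_def by (auto simp: insert_commute) blast

lemma Xsub_degree:
  assumes "x \<in> Xsub n" "v \<in> Vplus n"
  shows "(\<Sum>u \<in> {0..n} - {v}. x {v, u}) = 2"
proof -
  have "delta n {v} = (\<lambda>u. {v, u}) ` ({0..n} - {v})"
    using assms(2) by (simp add: delta_singleton incident_Edges_eq Vplus_def)
  moreover have "inj_on (\<lambda>u. {v, u}) ({0..n} - {v})"
    by (auto intro!: inj_onI simp: doubleton_eq_iff)
  moreover have "sum x (delta n {v}) = 2"
    using assms unfolding Xsub_def by blast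
  ultimately show ?thesis
    by (simp add: sum.reindex comp_def)
qed

definition supp_nbrs :: "(nat set \<Rightarrow> real) \<Rightarrow> nat \<Rightarrow> nat \<Rightarrow> nat set" where
  "supp_nbrs x n v = {u \<in> {0..n} - {v}. x {v, u} \<noteq> 0}"

lemma Xsub_degree_supp_nbrs:
  assumes "x \<in> Xsub n" "v \<in> Vplus n" "supp_nbrs x n v \<subseteq> B" "B \<subseteq> {0..n} - {v}"
  shows "(\<Sum>u \<in> B. x {v, u}) = 2"
proof -
  have "(\<Sum>u \<in> {0..n} - {v}. x {v, u}) = (\<Sum>u \<in> B. x {v, u})"
    using assms(3,4) by (intro sum.mono_neutral_right) (auto simp: supp_nbrs_def)
  then show ?thesis
    using Xsub_degree[OF assms(1,2)] by simp
qed

lemma supp_nbrs_eqI: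
  assumes x: "x \<in> Xsub n" and v: "v \<in> Vplus n" and B: "B \<subseteq> {0..n} - {v}"
    and sum_B: "(\<Sum>u \<in> B. x {v, u}) = 2" and nonzero: "\<forall>u \<in> B. x {v, u} \<noteq> 0"
  shows "supp_nbrs x n v = B"
proof -
  have nonneg: "\<forall>u \<in> {0..n} - {v} - B. 0 \<le> x {v, u}"
    using Xsub_edge_nonneg[OF x] v by (auto simp: Vplus_def)
  have "(\<Sum>u \<in> {0..n} - {v}. x {v, u}) = (\<Sum>u \<in> B. x {v, u}) + (\<Sum>u \<in> {0..n} - {v} - B. x {v, u})"
    using B by (metis add.commute finite_Diff finite_atLeastAtMost sum.subset_diff)
  then have "(\<Sum>u \<in> {0..n} - {v} - B. x {v, u}) = 0"
    using Xsub_degree[OF x v] sum_B by simp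
  then have "\<forall>u \<in> {0..n} - {v} - B. x {v, u} = 0"
    using nonneg sum_nonneg_eq_0_iff[of "{0..n} - {v} - B" "\<lambda>u. x {v, u}"] by simp
  then show ?thesis
    using B nonzero unfolding supp_nbrs_def by blast
qed

lemma rvert_0 [simp]: "rvert R 0 = 0"
  by (simp add: rvert_def)

lemma rvert_beyond [simp]: "length R < i \<Longrightarrow> rvert R i = 0"
  by (simp add: rvert_def)

lemma rvert_1: "R \<noteq> [] \<Longrightarrow> rvert R 1 = hd R"
  by (cases R) (simp_all add: rvert_def)

lemma in_set_conv_rvert: "v \<in> set R \<longleftrightarrow> (\<exists>i \<in> {1..length R}. rvert R i = v)"
proof
  assume "v \<in> set R"
  then obtain k where "k < length R" "R ! k = v"
    by (auto simp: in_set_conv_nth)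
  then show "\<exists>i \<in> {1..length R}. rvert R i = v"
    by (intro bexI[of _ "k + 1"]) (auto simp: rvert_def)
qed (auto simp: rvert_def)

lemma rvert_rev: "rvert (rev R) i = rvert R (length R + 1 - i)"
  by (auto simp: rvert_def rev_nth Suc_diff_Suc)

lemma route_of_rev: "route_of n x R \<Longrightarrow> route_of n x (rev R)"
proof -
  assume R: "route_of n x R"
  have "x {rvert (rev R) (i - 1), rvert (rev R) i} = 1"
    if "length R \<ge> 2" "i \<in> {1..length R + 1}" for i
  proof -
    have "length R + 2 - i \<in> {1..length R + 1}"
      using that by auto
    moreover have "rvert (rev R) (i - 1) = rvert R (length R + 2 - i)"
      "rvert (rev R) i = rvert R (length R + 2 - i - 1)"
      using that by (auto simp: rvert_rev)
    ultimately show ?thesis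
      using R that(1) unfolding route_of_def by (metis insert_commute)
  qed
  moreover have "hd (rev R) = hd R" if "length R = 1"
    using that by (cases R) auto
  ultimately show ?thesis
    using R unfolding route_of_def by simp
qed

lemma rvert_in_Vplus: "route_of n x R \<Longrightarrow> i \<in> {1..length R} \<Longrightarrow> rvert R i \<in> Vplus n"
  unfolding route_of_def rvert_def by auto

lemma rvert_eq_0_iff: "route_of n x R \<Longrightarrow> rvert R i = 0 \<longleftrightarrow> i \<notin> {1..length R}"
  using rvert_in_Vplus[of n x R i] by (auto simp: rvert_def Vplus_def)

lemma rvert_le: "route_of n x R \<Longrightarrow> rvert R i \<le> n"
  using rvert_in_Vplus[of n x R i] by (auto simp: rvert_def Vplus_def)

lemma rvert_inj:
  assumes "route_of n x R" "rvert R i = rvert R j" "rvert R i \<noteq> 0"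
  shows "i = j"
proof -
  have "i \<in> {1..length R}" "j \<in> {1..length R}"
    using assms rvert_eq_0_iff[OF assms(1)] by metis+
  moreover have "distinct R"
    using assms(1) unfolding route_of_def by blast
  ultimately show ?thesis
    using assms(2) by (auto simp: rvert_def nth_eq_iff_index_eq)
qed

lemma route_edge_value:
  assumes "route_of n x R" "i \<in> {1..length R + 1}"
  shows "x {rvert R (i - 1), rvert R i} = (if length R = 1 then 2 else 1)"
proof (cases "length R = 1")
  case True
  moreover have "R \<noteq> []"
    using True by auto
  ultimately have "i = 1 \<or> i = 2" "rvert R 1 = hd R"
    using assms(2) rvert_1 by auto
  then show ?thesis
    using assms(1) True unfolding route_of_def by (auto simp: insert_commute)
next
  case False
  moreover have "0 < length R"
    using assms(1) unfolding route_of_def by simp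
  ultimately have "length R \<ge> 2"
    by linarith
  then show ?thesis
    using assms unfolding route_of_def by auto
qed

lemma supp_nbrs_rvert:
  assumes x: "x \<in> Xsub n" and R: "route_of n x R" and i: "i \<in> {1..length R}"
  shows "supp_nbrs x n (rvert R i) = {rvert R (i - 1), rvert R (i + 1)}"
proof (rule supp_nbrs_eqI[OF x rvert_in_Vplus[OF R i]])
  let ?v = "rvert R i" and ?a = "rvert R (i - 1)" and ?c = "rvert R (i + 1)"
  have v0: "?v \<noteq> 0"
    using rvert_eq_0_iff[OF R] i by blast
  have "?a \<noteq> ?v" "?c \<noteq> ?v"
    using rvert_inj[OF R _ v0, of "i - 1"] rvert_inj[OF R _ v0, of "i + 1"] i by auto
  then show "{?a, ?c} \<subseteq> {0..n} - {?v}"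
    using rvert_le[OF R] by auto
  have xa: "x {?v, ?a} = (if length R = 1 then 2 else 1)"
    using route_edge_value[OF R, of i] i by (simp add: insert_commute)
  have xc: "x {?v, ?c} = (if length R = 1 then 2 else 1)"
    using route_edge_value[OF R, of "i + 1"] i by simp
  have "?a = ?c \<longleftrightarrow> length R = 1"
  proof
    assume "?a = ?c"
    then have "?a = 0" "?c = 0"
      using rvert_inj[OF R, of "i - 1" "i + 1"] by fastforce+
    then have "i - 1 \<notin> {1..length R}" "i + 1 \<notin> {1..length R}"
      using rvert_eq_0_iff[OF R] by blast+
    then show "length R = 1"
      using i by auto
  next
    assume "length R = 1"
    then show "?a = ?c"
      using i by simp
  qed
  then show "(\<Sum>u \<in> {?a, ?c}. x {?v, u}) = 2"
    using xa xc by auto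
  show "\<forall>u \<in> {?a, ?c}. x {?v, u} \<noteq> 0"
    using xa xc by simp
qed

lemma rvert_next_eq:
  assumes x: "x \<in> Xsub n" and R: "route_of n x R" and R': "route_of n x R'"
    and k: "k \<in> {1..length R}" and "rvert R k = rvert R' k'"
    and "rvert R (k - 1) = rvert R' (k' - 1)"
  shows "rvert R (k + 1) = rvert R' (k' + 1)"
proof -
  have "k' \<in> {1..length R'}"
    using assms(5) k rvert_eq_0_iff[OF R] rvert_eq_0_iff[OF R'] by metis
  then have "{rvert R (k - 1), rvert R (k + 1)} = {rvert R (k - 1), rvert R' (k' + 1)}"
    using supp_nbrs_rvert[OF x R k] supp_nbrs_rvert[OF x R'] assms(5,6) by simp
  then show ?thesis
    by (metis doubleton_eq_iff)
qed

lemma routes_agree_forward: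
  assumes x: "x \<in> Xsub n" and R: "route_of n x R" and R': "route_of n x R'"
    and i: "i \<le> length R" and "rvert R i = rvert R' j" and "rvert R (i + 1) = rvert R' (j + 1)"
  shows "length R' + i = length R + j"
    and "\<forall>t \<le> length R + 1 - i. rvert R (i + t) = rvert R' (j + t)"
proof -
  have pairs: "rvert R (i + t) = rvert R' (j + t) \<and> rvert R (i + t + 1) = rvert R' (j + t + 1)"
    if "t \<le> length R - i" for t
    using that
  proof (induction t)
    case 0
    then show ?case using assms(5,6) by simp
  next
    case (Suc t)
    then have "rvert R (i + t + 1 + 1) = rvert R' (j + t + 1 + 1)"
      using rvert_next_eq[OF x R R', of "i + t + 1" "j + t + 1"] by simp
    then show ?case using Suc by simp
  qed
  show agree: "\<forall>t \<le> length R + 1 - i. rvert R (i + t) = rvert R' (j + t)"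
  proof (intro allI impI)
    fix t assume "t \<le> length R + 1 - i"
    then show "rvert R (i + t) = rvert R' (j + t)"
      using pairs[of t] pairs[of "t - 1"] i by (cases t) auto
  qed
  have "R \<noteq> []"
    using R unfolding route_of_def by blast
  then have "rvert R (length R) \<noteq> 0"
    using rvert_eq_0_iff[OF R] by (simp add: Suc_le_eq)
  then have "rvert R' (j + (length R - i)) \<noteq> 0" "rvert R' (j + (length R + 1 - i)) = 0"
    using agree[rule_format, of "length R - i"] agree[rule_format, of "length R + 1 - i"] i
    by simp_all
  then have "j + (length R - i) \<in> {1..length R'}" "j + (length R + 1 - i) \<notin> {1..length R'}"
    using rvert_eq_0_iff[OF R'] by simp_all
  then show "length R' + i = length R + j"
    using i by auto
qed

lemma route_eq_if_hd_eq:
  assumes x: "x \<in> Xsub n" and R: "route_of n x R" and R': "route_of n x R'"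
    and hd: "hd R = hd R'"
  shows "R = R'"
proof -
  have "R \<noteq> []" "R' \<noteq> []"
    using R R' unfolding route_of_def by blast+
  then have "rvert R (0 + 1) = rvert R' (0 + 1)"
    using hd rvert_1 by simp
  from routes_agree_forward[OF x R R' _ _ this]
  have len: "length R' = length R" and agree: "\<forall>t \<le> length R + 1. rvert R t = rvert R' t"
    by simp_all
  show ?thesis
  proof (rule nth_equalityI)
    fix k assume "k < length R"
    then show "R ! k = R' ! k"
      using agree[rule_format, of "k + 1"] len by (simp add: rvert_def)
  qed (use len in simp)
qed

text \<open>Propagating forward along the reversed routes reaches their first customers.\<close>

lemma route_eq_if_adjacent_eq:
  assumes x: "x \<in> Xsub n" and R: "route_of n x R" and R': "route_of n x R'"
    and i: "i \<le> length R" and j: "j \<le> length R'"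
    and "rvert R i = rvert R' j" and "rvert R (i + 1) = rvert R' (j + 1)"
  shows "R = R'"
proof -
  let ?i = "length R - i" and ?j = "length R' - j"
  have "rvert (rev R) ?i = rvert (rev R') ?j" "rvert (rev R) (?i + 1) = rvert (rev R') (?j + 1)"
    using assms(6,7) i j by (simp_all add: rvert_rev Suc_diff_le)
  note agree = routes_agree_forward[OF x route_of_rev[OF R] route_of_rev[OF R'] _ this]
  have "i = j"
    using agree(1) i j by simp
  then have "rvert (rev R) (length R) = rvert (rev R') (length R')"
    using agree(2)[rule_format, of i] i j by simp
  moreover have "R \<noteq> []" "R' \<noteq> []"
    using R R' unfolding route_of_def by blast+
  moreover have "rvert (rev R) (length R) = rvert R 1" "rvert (rev R') (length R') = rvert R' 1"
    by (simp_all add: rvert_rev)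
  ultimately have "hd R = hd R'"
    using rvert_1 by metis
  then show ?thesis
    by (rule route_eq_if_hd_eq[OF x R R'])
qed

lemma routes_share_customer:
  assumes x: "x \<in> Xsub n" and R: "route_of n x R" and R': "route_of n x R'"
    and v: "v \<in> set R" "v \<in> set R'"
  shows "R' = R \<or> R' = rev R"
proof -
  obtain i j where i: "i \<in> {1..length R}" and j: "j \<in> {1..length R'}"
    and v_ij: "rvert R i = v" "rvert R' j = v"
    using v by (auto simp: in_set_conv_rvert)
  then have "{rvert R (i - 1), rvert R (i + 1)} = {rvert R' (j - 1), rvert R' (j + 1)}"
    using supp_nbrs_rvert[OF x R i] supp_nbrs_rvert[OF x R' j] by simp
  then consider "rvert R (i + 1) = rvert R' (j + 1)" | "rvert R (i + 1) = rvert R' (j - 1)"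
    by (auto simp: doubleton_eq_iff)
  then show ?thesis
  proof cases
    case 1
    then show ?thesis
      using route_eq_if_adjacent_eq[OF x R R', of i j] i j v_ij by simp
  next
    case 2
    let ?j = "length R' + 1 - j"
    have "rvert (rev R') ?j = v" "rvert (rev R') (?j + 1) = rvert R' (j - 1)" "?j \<le> length R'"
      using j v_ij by (auto simp: rvert_rev)
    then have "R = rev R'"
      using route_eq_if_adjacent_eq[OF x R route_of_rev[OF R'], of i ?j] i v_ij 2 by simp
    then show ?thesis
      by simp
  qed
qed

section \<open>Existence of routes\<close>

definition unit_path :: "(nat set \<Rightarrow> real) \<Rightarrow> nat \<Rightarrow> nat list \<Rightarrow> bool" where
  "unit_path x n P \<longleftrightarrow> P \<noteq> [] \<and> distinct P \<and> set P \<subseteq> Vplus n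
     \<and> (\<forall>i. i + 1 < length P \<longrightarrow> x {P ! i, P ! (i + 1)} = 1)"

lemma unit_path_rev: "unit_path x n P \<Longrightarrow> unit_path x n (rev P)"
proof -
  assume P: "unit_path x n P"
  have "x {rev P ! i, rev P ! (i + 1)} = 1" if "i + 1 < length P" for i
  proof -
    have "rev P ! i = P ! (length P - 2 - i + 1)" "rev P ! (i + 1) = P ! (length P - 2 - i)"
      using that by (auto simp: rev_nth intro!: arg_cong[where f = "(!) P"])
    moreover have "length P - 2 - i + 1 < length P"
      using that by simp
    ultimately show ?thesis
      using P unfolding unit_path_def by (simp add: insert_commute)
  qed
  then show ?thesis
    using P unfolding unit_path_def by simp
qed

lemma unit_path_Cons:
  assumes "unit_path x n P" "u \<in> Vplus n" "u \<notin> set P" "x {u, P ! 0} = 1"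
  shows "unit_path x n (u # P)"
  unfolding unit_path_def
proof (intro conjI allI impI)
  fix i assume "i + 1 < length (u # P)"
  then show "x {(u # P) ! i, (u # P) ! (i + 1)} = 1"
    using assms unfolding unit_path_def by (cases i) auto
qed (use assms in \<open>auto simp: unit_path_def\<close>)

lemma unit_path_nth_inj:
  "unit_path x n P \<Longrightarrow> P ! a = P ! b \<Longrightarrow> a < length P \<Longrightarrow> b < length P \<Longrightarrow> a = b"
  unfolding unit_path_def using nth_eq_iff_index_eq by blast

lemma unit_path_cycle_sum:
  assumes P: "unit_path x n P" and k: "2 \<le> k" "k < length P"
  shows "sum x (insert {P ! 0, P ! k} ((\<lambda>i. {P ! i, P ! (i + 1)}) ` {..<k})) = x {P ! 0, P ! k} + k"
proof -
  define e where "e i = {P ! i, P ! (i + 1)}" for i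
  note nth_inj = unit_path_nth_inj[OF P]
  have "inj_on e {..<k}"
  proof (rule inj_onI)
    fix a b assume "a \<in> {..<k}" "b \<in> {..<k}" "e a = e b"
    then show "a = b"
      using k nth_inj[of a b] nth_inj[of a "b + 1"] nth_inj[of "a + 1" b]
      unfolding e_def by (auto simp: doubleton_eq_iff)
  qed
  then have "sum x (e ` {..<k}) = (\<Sum>i < k. x (e i))"
    by (simp add: sum.reindex)
  also have "\<dots> = k"
    using P k unfolding unit_path_def e_def by simp
  finally have "sum x (e ` {..<k}) = k" .
  moreover have "{P ! 0, P ! k} \<notin> e ` {..<k}"
  proof
    assume "{P ! 0, P ! k} \<in> e ` {..<k}"
    then obtain i where "i < k" "{P ! 0, P ! k} = {P ! i, P ! (i + 1)}"
      unfolding e_def by blast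
    then consider "P ! 0 = P ! i" "P ! k = P ! (i + 1)" | "P ! 0 = P ! (i + 1)"
      unfolding doubleton_eq_iff by blast
    moreover have "0 < length P" "i < length P" "i + 1 < length P"
      using k \<open>i < k\<close> by auto
    ultimately show False
    proof cases
      case 1
      have "0 = i"
        using nth_inj[OF 1(1) \<open>0 < length P\<close> \<open>i < length P\<close>] .
      moreover have "k = i + 1"
        using nth_inj[OF 1(2) k(2) \<open>i + 1 < length P\<close>] .
      ultimately show False
        using k by simp
    next
      case 2
      have "0 = i + 1"
        using nth_inj[OF 2 \<open>0 < length P\<close> \<open>i + 1 < length P\<close>] .
      then show False
        by simp
    qed
  qed
  ultimately show ?thesis
    unfolding e_def by simp
qed

text \<open>With the chord, the k + 1 customers P ! 0, ..., P ! k span edges of total value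
  k + x(chord), while the subtour constraint allows only k.\<close>

lemma unit_path_chord_eq_0:
  assumes x: "x \<in> Xsub n" and P: "unit_path x n P" and k: "2 \<le> k" "k < length P"
  shows "x {P ! 0, P ! k} = 0"
proof -
  define S where "S = (!) P ` {..k}"
  have "S \<subseteq> Vplus n"
    using P k unfolding S_def unit_path_def by (auto intro: nth_mem)
  have card_S: "card S = k + 1"
    unfolding S_def using k unit_path_nth_inj[OF P] by (subst card_image) (auto intro!: inj_onI)
  have in_Ein: "{P ! a, P ! b} \<in> Ein n S" if "a \<le> k" "b \<le> k" "a \<noteq> b" for a b
  proof -
    have "P ! a \<in> Vplus n" "P ! b \<in> Vplus n" "P ! a \<noteq> P ! b"
      using that k \<open>S \<subseteq> Vplus n\<close> unit_path_nth_inj[OF P, of a b] unfolding S_def by auto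
    then show ?thesis
      using that unfolding Ein_def S_def Vplus_def by (auto intro!: doubleton_in_Edges)
  qed
  have "sum x (insert {P ! 0, P ! k} ((\<lambda>i. {P ! i, P ! (i + 1)}) ` {..<k})) \<le> sum x (Ein n S)"
  proof (rule sum_mono2)
    show "finite (Ein n S)"
      using finite_Edges unfolding Ein_def by simp
    show "insert {P ! 0, P ! k} ((\<lambda>i. {P ! i, P ! (i + 1)}) ` {..<k}) \<subseteq> Ein n S"
      using in_Ein k by auto
    show "0 \<le> x e" if "e \<in> Ein n S - insert {P ! 0, P ! k} ((\<lambda>i. {P ! i, P ! (i + 1)}) ` {..<k})" for e
      using x that unfolding Xsub_def Ein_def by auto
  qed
  moreover have "S \<noteq> {}"
    using card_S by auto
  then have "sum x (Ein n S) \<le> k"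
    using Xsub_subtour[OF x _ \<open>S \<subseteq> Vplus n\<close>] card_S by simp
  moreover have "0 \<le> x {P ! 0, P ! k}"
    using in_Ein[of 0 k] k x unfolding Xsub_def Ein_def by auto
  ultimately show ?thesis
    using unit_path_cycle_sum[OF P k] by simp
qed

lemma Ints_unit_interval: "(r :: real) \<in> \<int> \<Longrightarrow> 0 \<le> r \<Longrightarrow> r \<le> 1 \<Longrightarrow> r \<noteq> 0 \<Longrightarrow> r = 1"
  by (elim Ints_cases) simp

text \<open>A further support neighbour of the first vertex would either extend the path or be
  joined to it by a chord.\<close>

lemma maximal_unit_path_supp_nbrs:
  assumes x: "x \<in> Xsub n" and x_int: "\<forall>e \<in> Edges n. x e \<in> \<int>" and P: "unit_path x n P"
    and maximal: "\<And>Q. unit_path x n Q \<Longrightarrow> length Q \<le> length P"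
    and u: "u \<in> supp_nbrs x n (P ! 0)" "u \<noteq> 0"
  shows "1 < length P \<and> u = P ! 1"
proof (rule ccontr)
  assume not_succ: "\<not> (1 < length P \<and> u = P ! 1)"
  have p: "P ! 0 \<in> Vplus n"
    using P unfolding unit_path_def by (auto intro: nth_mem)
  have uV: "u \<in> Vplus n" and "u \<noteq> P ! 0"
    using u unfolding supp_nbrs_def Vplus_def by auto
  have "x {P ! 0, u} \<in> \<int>" "0 \<le> x {P ! 0, u}" "x {P ! 0, u} \<le> 1" "x {P ! 0, u} \<noteq> 0"
    using x_int doubleton_in_Edges Xsub_edge_nonneg[OF x] Xsub_edge_le_1[OF x p uV] \<open>u \<noteq> P ! 0\<close> u p uV
    unfolding supp_nbrs_def Vplus_def by auto
  then have x_pu: "x {P ! 0, u} = 1"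
    by (rule Ints_unit_interval)
  show False
  proof (cases "u \<in> set P")
    case False
    then have "unit_path x n (u # P)"
      using unit_path_Cons[OF P uV] x_pu by (simp add: insert_commute)
    then show False
      using maximal[of "u # P"] by simp
  next
    case True
    then obtain k where k: "k < length P" "P ! k = u"
      by (auto simp: in_set_conv_nth)
    have "k \<noteq> 0"
      using k \<open>u \<noteq> P ! 0\<close> by metis
    moreover have "k \<noteq> 1"
      using k not_succ by auto
    ultimately have "x {P ! 0, P ! k} = 0"
      using unit_path_chord_eq_0[OF x P _ k(1)] by simp
    then show False
      using x_pu k by simp
  qed
qed

lemma maximal_unit_path_depot_edge:
  assumes x: "x \<in> Xsub n" and x_int: "\<forall>e \<in> Edges n. x e \<in> \<int>" and P: "unit_path x n P"
    and maximal: "\<And>Q. unit_path x n Q \<Longrightarrow> length Q \<le> length P"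
  shows "x {0, P ! 0} = (if length P = 1 then 2 else 1)"
proof -
  have "P \<noteq> []" and path_edge: "\<And>i. i + 1 < length P \<Longrightarrow> x {P ! i, P ! (i + 1)} = 1"
    using P unfolding unit_path_def by auto
  have p: "P ! 0 \<in> Vplus n"
    using P \<open>P \<noteq> []\<close> unfolding unit_path_def by (auto intro: nth_mem)
  define B where "B = (if length P = 1 then {0} else {0, P ! 1})"
  have P1: "P ! 1 \<in> Vplus n" "P ! 1 \<noteq> P ! 0" if "length P \<noteq> 1"
    using that P \<open>P \<noteq> []\<close> unit_path_nth_inj[OF P, of 1 0] unfolding unit_path_def
    by (auto intro: nth_mem simp: Suc_lessI)
  have "B \<subseteq> {0..n} - {P ! 0}"
    using p P1 unfolding B_def Vplus_def by auto
  moreover have "supp_nbrs x n (P ! 0) \<subseteq> B"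
  proof
    fix u assume "u \<in> supp_nbrs x n (P ! 0)"
    then show "u \<in> B"
      using maximal_unit_path_supp_nbrs[OF x x_int P maximal, of u] unfolding B_def
      by (cases "u = 0") auto
  qed
  ultimately have "(\<Sum>u \<in> B. x {P ! 0, u}) = 2"
    using Xsub_degree_supp_nbrs[OF x p] by simp
  moreover have "x {P ! 0, P ! 1} = 1" if "length P \<noteq> 1"
    using path_edge[of 0] that \<open>P \<noteq> []\<close> by (simp add: Suc_lessI)
  ultimately show ?thesis
    using P1 unfolding B_def Vplus_def by (auto simp: insert_commute)
qed

lemma route_exists:
  assumes x: "x \<in> Xsub n" and x_int: "\<forall>e \<in> Edges n. x e \<in> \<int>" and "1 \<le> n"
  shows "\<exists>R. route_of n x R"
proof -
  define paths where "paths = {P. unit_path x n P}"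
  have "paths \<subseteq> {P. set P \<subseteq> Vplus n \<and> distinct P}"
    unfolding paths_def unit_path_def by blast
  then have "finite (length ` paths)"
    using finite_subset_distinct[of "Vplus n"] by (auto simp: Vplus_def intro: finite_subset)
  moreover have "[1] \<in> paths"
    using \<open>1 \<le> n\<close> unfolding paths_def unit_path_def Vplus_def by simp
  ultimately obtain P where "P \<in> paths" "length P = Max (length ` paths)"
    using Max_in[of "length ` paths"] by fastforce
  then have P: "unit_path x n P" and maximal: "\<And>Q. unit_path x n Q \<Longrightarrow> length Q \<le> length P"
    using \<open>finite (length ` paths)\<close> unfolding paths_def by auto
  have "\<And>Q. unit_path x n Q \<Longrightarrow> length Q \<le> length (rev P)"
    using maximal by simp
  note first = maximal_unit_path_depot_edge[OF x x_int P maximal]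
    and last = maximal_unit_path_depot_edge[OF x x_int unit_path_rev[OF P] this]
  have "P \<noteq> []" and path_edge: "\<And>i. i + 1 < length P \<Longrightarrow> x {P ! i, P ! (i + 1)} = 1"
    using P unfolding unit_path_def by auto
  have "x {rvert P (i - 1), rvert P i} = 1" if l: "length P \<ge> 2" and i: "i \<in> {1..length P + 1}" for i
  proof -
    have "i = 1 \<or> i = length P + 1 \<or> (\<exists>j. i = j + 2 \<and> j + 1 < length P)"
      using i by (auto intro!: exI[of _ "i - 2"])
    then consider "i = 1" | "i = length P + 1" | j where "i = j + 2" "j + 1 < length P"
      by blast
    then show ?thesis
    proof cases
      case (3 j)
      then show ?thesis
        using path_edge[OF 3(2)] by (simp add: rvert_def)
    qed (use first last l \<open>P \<noteq> []\<close> in \<open>auto simp: rvert_def rev_nth insert_commute\<close>)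
  qed
  then have "route_of n x P"
    using P first \<open>P \<noteq> []\<close> unfolding route_of_def unit_path_def by (auto simp: hd_conv_nth)
  then show ?thesis ..
qed

lemma Routes_nonempty:
  "x \<in> Xsub n \<Longrightarrow> \<forall>e \<in> Edges n. x e \<in> \<int> \<Longrightarrow> 1 \<le> n \<Longrightarrow> Routes n x \<noteq> {}"
  using route_exists unfolding Routes_def by blast

section \<open>Block decomposition of \<Pi>(x)\<close>

lemma finite_Routes: "finite (Routes n x)"
proof (rule finite_subset)
  show "Routes n x \<subseteq> {R. set R \<subseteq> Vplus n \<and> distinct R}"
    unfolding Routes_def route_of_def by blast
  show "finite {R. set R \<subseteq> Vplus n \<and> distinct R}"
    by (rule finite_subset_distinct) (simp add: Vplus_def)
qed

lemma Routes_disjoint_or_PiR_eq: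
  assumes "x \<in> Xsub n" "R \<in> Routes n x" "R' \<in> Routes n x"
  shows "({1..N} \<times> set R) \<inter> ({1..N} \<times> set R') = {} \<or> PiR n N C d R' = PiR n N C d R"
proof (cases "set R \<inter> set R' = {}")
  case False
  then obtain v where "v \<in> set R" "v \<in> set R'"
    by blast
  then have "R' = R \<or> R' = rev R"
    using routes_share_customer assms unfolding Routes_def by blast
  then show ?thesis
    by auto
qed blast

lemma RAmb_0: "RAmb 0 N = realpts (Amb 0 N \<inter> Box 0 N b)"
proof -
  have "RAmb 0 N = {\<lambda>_. 0}" "Amb 0 N \<inter> Box 0 N b = {\<lambda>_. 0}"
    unfolding RAmb_def Amb_def Box_def Vplus_def by auto
  then show ?thesis
    unfolding realpts_def by simp
qed

lemma conv_PiX_Box_subset: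
  "conv (realpts (PiX n N C d x \<inter> Box n N b))
     \<subseteq> RAmb n N \<inter> (\<Inter>R \<in> Routes n x. conv (realpts (PiR n N C d R \<inter> Box n N b)))"
proof -
  have "realpts (PiX n N C d x \<inter> Box n N b) \<subseteq> RAmb n N"
    unfolding realpts_def RAmb_def PiX_def Amb_def by auto
  moreover have "realpts (PiX n N C d x \<inter> Box n N b) \<subseteq> realpts (PiR n N C d R \<inter> Box n N b)"
    if "R \<in> Routes n x" for R
    using that unfolding realpts_def PiX_def by blast
  ultimately show ?thesis
    using conv_subset_RAmb conv_mono by blast
qed

lemma conv_Amb_Box_superset:
  assumes x: "x \<in> Xsub n" and x_int: "\<forall>e \<in> Edges n. x e \<in> \<int>"
  shows "RAmb n N \<inter> (\<Inter>R \<in> Routes n x. conv (realpts (PiR n N C d R \<inter> Box n N b)))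
           \<subseteq> conv (realpts (Amb n N \<inter> Box n N b))"
proof (cases "n = 0")
  case True
  then show ?thesis
    using RAmb_0 subset_conv by blast
next
  case False
  then obtain R where "R \<in> Routes n x"
    using Routes_nonempty[OF x x_int] by fastforce
  moreover have "realpts (PiR n N C d R \<inter> Box n N b) \<subseteq> realpts (Amb n N \<inter> Box n N b)"
    unfolding realpts_def PiR_def by (intro image_mono) blast
  ultimately show ?thesis
    using conv_mono by blast
qed

lemma conv_PiX_Box_superset:
  assumes x: "x \<in> Xsub n"
    and z_Base: "z \<in> conv (realpts (Amb n N \<inter> Box n N b))"
    and z_A: "\<forall>R \<in> Routes n x. z \<in> conv (realpts (PiR n N C d R \<inter> Box n N b))"
  shows "z \<in> conv (realpts (PiX n N C d x \<inter> Box n N b))"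
proof -
  let ?Base = "Amb n N \<inter> Box n N b" and ?A = "\<lambda>R. PiR n N C d R \<inter> Box n N b"
  have "z \<in> conv (realpts (?Base \<inter> \<Inter>(?A ` Routes n x)))"
  proof (rule conv_realpts_Inter_determined[OF finite_Routes, where blk = "\<lambda>R. {1..N} \<times> set R"])
    show "\<forall>P. \<forall>a \<in> ?Base. \<forall>c \<in> ?Base. merge_on P a c \<in> ?Base"
      using merge_on_Amb_Box by blast
    show "\<forall>R \<in> Routes n x. ?A R \<subseteq> ?Base \<and> determined_on ({1..N} \<times> set R) ?Base (?A R)"
      using determined_on_PiR_Box unfolding PiR_def by blast
    show "\<forall>R \<in> Routes n x. \<forall>R' \<in> Routes n x.
        ({1..N} \<times> set R) \<inter> ({1..N} \<times> set R') = {} \<or> ?A R' = ?A R"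
      using Routes_disjoint_or_PiR_eq[OF x] by metis
  qed (use z_Base z_A in simp_all)
  moreover have "PiX n N C d x \<inter> Box n N b = ?Base \<inter> \<Inter>(?A ` Routes n x)"
    unfolding PiX_def by blast
  ultimately show ?thesis
    by simp
qed

theorem lemma7:
  fixes n N k :: nat and C :: real and d :: "nat \<Rightarrow> nat \<Rightarrow> real" and p :: "nat \<Rightarrow> real"
    and b :: "nat \<Rightarrow> int" and X :: "(nat set \<Rightarrow> real) set" and xbar :: "nat set \<Rightarrow> real"
  assumes C_pos: "C > 0"
    and d_rat: "\<forall>\<xi> \<in> {1..N}. \<forall>v \<in> Vplus n. d \<xi> v \<in> \<rat>"
    and d_bnd: "\<forall>\<xi> \<in> {1..N}. \<forall>v \<in> Vplus n. 0 \<le> d \<xi> v \<and> d \<xi> v \<le> C"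
    and p_nonneg: "\<forall>\<xi> \<in> {1..N}. 0 \<le> p \<xi>"
    and p_sum: "(\<Sum>\<xi> \<in> {1..N}. p \<xi>) = 1"
    and X_choice: "X = Xsub n \<or> X = Xcvrp n k C (\<lambda>v. \<Sum>\<xi> \<in> {1..N}. p \<xi> * d \<xi> v)"
    and b_nonneg: "\<forall>v \<in> Vplus n. 0 \<le> b v"
    and xbar_X: "xbar \<in> X"
    and xbar_int: "\<forall>e \<in> Edges n. xbar e \<in> \<int>"
  shows "conv (realpts (PiX n N C d xbar \<inter> Box n N b))
         = RAmb n N \<inter> (\<Inter>R \<in> Routes n xbar. conv (realpts (PiR n N C d R \<inter> Box n N b)))"
proof (rule equalityI[OF conv_PiX_Box_subset subsetI])
  fix z assume z: "z \<in> RAmb n N \<inter> (\<Inter>R \<in> Routes n xbar. conv (realpts (PiR n N C d R \<inter> Box n N b)))"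
  have x: "xbar \<in> Xsub n"
    using X_choice xbar_X unfolding Xcvrp_def by auto
  have "z \<in> conv (realpts (Amb n N \<inter> Box n N b))"
    using conv_Amb_Box_superset[OF x xbar_int] z by blast
  then show "z \<in> conv (realpts (PiX n N C d xbar \<inter> Box n N b))"
    using z by (intro conv_PiX_Box_superset[OF x]) auto
qed

end
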